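(* Fix $K\in\mathbb{N}$, and let $O=\{A_1,\dots,A_n\}\in\Omega_{n,n+K}$. Then: (1) For every $i$, $|A_i|\leq K+1$. (2) $|\{i\in[n]: |A_i|\geq 2\}|\leq K$. (3) Fix $\mu\vdash 4K$ and let $n\geq 3K$. For every standard tableau $T$ of shape $\mu^{(n-3K)}$, the monomials $m_i:=\mathrm{Sub}^T_{(x,y)}(x_{A_i})$ (so that $\mathrm{Sub}^T_{(x,y)}(P_O)=P_n(m_1,\dots,m_n)$) satisfy: (i) $|m_i|\leq K+1$ for every $i$; (ii) $|\{i\in[n]:|m_i|\geq 2\}|\leq K$; (iii) $|\{i\in[n]: m_i\neq y_1\}|\leq 16K^2$.
   Context: $\Omega_{n,m}$ is the set of ordered partitions $O=\{A_1,\dots,A_n\}$ of $[m]=\{1,\dots,m\}$ into $n$ nonempty ordered lists $A_i$ whose underlying sets are pairwise disjoint with union $[m]$; $|A_i|$ is the length of $A_i$. For $A=[\![ab\cdots c]\!]$, $x_A=x_ax_b\cdots x_c$; $P_n(z_1,\dots,z_n)=\sum_{\sigma\in S_n}z_{\sigma(1)}\cdots z_{\sigma(n)}$ and $P_O=P_n(x_{A_1},\dots,x_{A_n})$. For $\nu=(\nu_1,\dots,\nu_r)$, $\nu^{(s)}=(\nu_1+s,\nu_2,\dots,\nu_r)$. A standard tableau $T$ of shape $\nu\vdash m$ is the Young diagram of $\nu$ filled with $1,\dots,m$ increasing along rows and columns; $\mathrm{Sub}^T_{(x,y)}$ is the algebra homomorphism $x_j\mapsto y_{i_j}$ into the free algebra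 on $Y=\{y_1,y_2,\dots\}$, $i_j$ being the row of $T$ containing $j$. $|m|$ denotes the length of a monomial $m$. *)

theory Defs
  imports Main
begin

definition Omega :: "nat \<Rightarrow> nat \<Rightarrow> nat list set set" where
  "Omega n m = {P. finite P \<and> card P = n \<and>
     (\<forall>A\<in>P. A \<noteq> [] \<and> distinct A) \<and>
     (\<forall>A\<in>P. \<forall>B\<in>P. A \<noteq> B \<longrightarrow> set A \<inter> set B = {}) \<and>
     (\<Union>A\<in>P. set A) = {1..m}}"

definition is_partition :: "nat list \<Rightarrow> nat \<Rightarrow> bool" where
  "is_partition \<nu> m \<longleftrightarrow> (\<forall>x\<in>set \<nu>. 0 < x) \<and> sorted_wrt (\<ge>) \<nu> \<and> sum_list \<nu> = m"

fun shift_part :: "nat list \<Rightarrow> nat \<Rightarrow> nat list" where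
  "shift_part [] s = [s]"
| "shift_part (a # r) s = (a + s) # r"

text \<open>Cells of the Young diagram (rows and columns 0-indexed).\<close>
definition cells :: "nat list \<Rightarrow> (nat \<times> nat) set" where
  "cells \<nu> = {(r, c). r < length \<nu> \<and> c < \<nu> ! r}"

definition standard_tableau :: "nat list \<Rightarrow> nat \<Rightarrow> (nat \<times> nat \<Rightarrow> nat) \<Rightarrow> bool" where
  "standard_tableau \<nu> m T \<longleftrightarrow> bij_betw T (cells \<nu>) {1..m} \<and>
     (\<forall>r c. (r, c) \<in> cells \<nu> \<longrightarrow> (r, Suc c) \<in> cells \<nu> \<longrightarrow> T (r, c) < T (r, Suc c)) \<and>
     (\<forall>r c. (r, c) \<in> cells \<nu> \<longrightarrow> (Suc r, c) \<in> cells \<nu> \<longrightarrow> T (r, c) < T (Suc r, c))"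

text \<open>Row (1-indexed) of T containing j; letter y_i is represented by i.\<close>
definition tab_row :: "nat list \<Rightarrow> (nat \<times> nat \<Rightarrow> nat) \<Rightarrow> nat \<Rightarrow> nat" where
  "tab_row \<nu> T j = Suc (fst (THE p. p \<in> cells \<nu> \<and> T p = j))"

text \<open>Sub^T_(x,y)(x_A): monomials of the free algebra are words (lists of letters).\<close>
definition sub_word :: "nat list \<Rightarrow> (nat \<times> nat \<Rightarrow> nat) \<Rightarrow> nat list \<Rightarrow> nat list" where
  "sub_word \<nu> T A = map (tab_row \<nu> T) A"

end

theory Submission
  imports Defs
begin

text \<open>The n lists of an ordered partition of [n + K] have total length n + K, so their
  excesses |A| - 1 sum to K; this gives (1) and (2), and substitution preserves lengths.
  A list whose image is not y_1 is either one of the at most K lists of length at least 2,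
  or a singleton whose entry lies outside the first row of T. Distinct singletons have
  distinct entries, and the first row of the shape has at least n - 3K of its n + K cells,
  so there are at most 4K such singletons. Hence at most 5K \<le> 16K^2 lists are not sent
  to y_1.\<close>

lemma sum_length_Omega:
  assumes "OP \<in> Omega n m"
  shows "(\<Sum>A\<in>OP. length A) = m"
proof -
  from assms have fin: "finite OP" and dist: "\<And>A. A \<in> OP \<Longrightarrow> distinct A"
    and disj: "\<And>A B. A \<in> OP \<Longrightarrow> B \<in> OP \<Longrightarrow> A \<noteq> B \<Longrightarrow> set A \<inter> set B = {}"
    and un: "(\<Union>A\<in>OP. set A) = {1..m}"
    unfolding Omega_def by auto
  have "m = card (\<Union>A\<in>OP. set A)" using un by simp
  also have "\<dots> = (\<Sum>A\<in>OP. card (set A))"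
    using fin disj by (intro card_UN_disjoint) auto
  also have "\<dots> = (\<Sum>A\<in>OP. length A)"
    using dist by (intro sum.cong) (auto simp: distinct_card)
  finally show ?thesis by simp
qed

lemma sum_excess_Omega:
  assumes "OP \<in> Omega n (n + K)"
  shows "(\<Sum>A\<in>OP. length A - 1) = K"
proof -
  from assms have card: "card OP = n" and nonempty: "\<And>A. A \<in> OP \<Longrightarrow> A \<noteq> []"
    unfolding Omega_def by auto
  have "n + K = (\<Sum>A\<in>OP. length A)"
    using sum_length_Omega[OF assms] by simp
  also have "\<dots> = (\<Sum>A\<in>OP. (length A - 1) + 1)"
    using nonempty by (intro sum.cong) auto
  also have "\<dots> = (\<Sum>A\<in>OP. length A - 1) + n"
    by (simp add: sum.distrib card del: Suc_pred One_nat_def)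
  finally show ?thesis by simp
qed

lemma length_le_Omega:
  assumes "OP \<in> Omega n (n + K)" and "A \<in> OP"
  shows "length A \<le> K + 1"
proof -
  have "finite OP" using assms(1) unfolding Omega_def by simp
  then have "length A - 1 \<le> (\<Sum>A\<in>OP. length A - 1)"
    using assms(2) by (intro member_le_sum) auto
  then show ?thesis using sum_excess_Omega[OF assms(1)] by simp
qed

lemma card_long_Omega:
  assumes "OP \<in> Omega n (n + K)"
  shows "card {A \<in> OP. 2 \<le> length A} \<le> K"
proof -
  have fin: "finite OP" using assms unfolding Omega_def by simp
  have "card {A \<in> OP. 2 \<le> length A} = (\<Sum>A\<in>{A \<in> OP. 2 \<le> length A}. 1)" by simp
  also have "\<dots> \<le> (\<Sum>A\<in>{A \<in> OP. 2 \<le> length A}. length A - 1)"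
    by (intro sum_mono) auto
  also have "\<dots> \<le> (\<Sum>A\<in>OP. length A - 1)"
    using fin by (intro sum_mono2) auto
  finally show ?thesis using sum_excess_Omega[OF assms] by simp
qed

lemma length_sub_word [simp]: "length (sub_word \<nu> T A) = length A"
  by (simp add: sub_word_def)

lemma tab_row_apply:
  assumes "inj_on T (cells \<nu>)" and "p \<in> cells \<nu>"
  shows "tab_row \<nu> T (T p) = Suc (fst p)"
proof -
  have "(THE q. q \<in> cells \<nu> \<and> T q = T p) = p"
    using assms by (auto dest: inj_onD)
  then show ?thesis unfolding tab_row_def by simp
qed

lemma card_cells_off_first_row:
  assumes "finite (cells \<nu>)" and "\<nu> \<noteq> []"
  shows "card {p \<in> cells \<nu>. fst p \<noteq> 0} = card (cells \<nu>) - \<nu> ! 0"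
proof -
  let ?row0 = "(\<lambda>c. (0::nat, c)) ` {..<\<nu> ! 0}"
  have sub: "?row0 \<subseteq> cells \<nu>" using assms(2) by (auto simp: cells_def)
  have "{p \<in> cells \<nu>. fst p \<noteq> 0} = cells \<nu> - ?row0" by (auto simp: cells_def)
  then have "card {p \<in> cells \<nu>. fst p \<noteq> 0} = card (cells \<nu>) - card ?row0"
    using card_Diff_subset[OF finite_subset[OF sub assms(1)] sub] by simp
  also have "card ?row0 = \<nu> ! 0" by (simp add: card_image inj_on_def)
  finally show ?thesis .
qed

lemma card_singletons_off_first_row:
  assumes "OP \<in> Omega n m" and "bij_betw T (cells \<nu>) {1..m}" and "\<nu> \<noteq> []"
  shows "card {A \<in> OP. length A = 1 \<and> sub_word \<nu> T A \<noteq> [1]} \<le> m - \<nu> ! 0"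
proof -
  let ?S = "{A \<in> OP. length A = 1 \<and> sub_word \<nu> T A \<noteq> [1]}"
  let ?C = "{p \<in> cells \<nu>. fst p \<noteq> 0}"
  from assms(1) have disj: "\<And>A B. A \<in> OP \<Longrightarrow> B \<in> OP \<Longrightarrow> A \<noteq> B \<Longrightarrow> set A \<inter> set B = {}"
    and un: "(\<Union>A\<in>OP. set A) = {1..m}"
    unfolding Omega_def by auto
  have inj: "inj_on T (cells \<nu>)" and img: "T ` cells \<nu> = {1..m}"
    using assms(2) by (auto simp: bij_betw_def)
  have fin: "finite (cells \<nu>)" using bij_betw_finite[OF assms(2)] by simp
  have inj_hd: "inj_on hd ?S"
  proof (rule inj_onI)
    fix A B assume "A \<in> ?S" "B \<in> ?S" "hd A = hd B"
    then have "A \<noteq> []" "B \<noteq> []" "hd A = hd B" by auto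
    then have "hd A \<in> set A \<inter> set B" by (metis IntI hd_in_set)
    with \<open>A \<in> ?S\<close> \<open>B \<in> ?S\<close> disj show "A = B" by blast
  qed
  have hd_S: "hd ` ?S \<subseteq> T ` ?C"
  proof
    fix j assume "j \<in> hd ` ?S"
    then obtain a where a: "[a] \<in> OP" "tab_row \<nu> T a \<noteq> 1" "j = a"
      by (auto simp: sub_word_def length_Suc_conv)
    then have "j \<in> (\<Union>A\<in>OP. set A)" by force
    then have "j \<in> T ` cells \<nu>" using un img by simp
    then obtain p where p: "p \<in> cells \<nu>" "T p = j" by blast
    then have "fst p \<noteq> 0" using a tab_row_apply[OF inj p(1)] by simp
    with p show "j \<in> T ` ?C" by blast
  qed
  have "card ?S = card (hd ` ?S)" using inj_hd by (simp add: card_image)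
  also have "\<dots> \<le> card (T ` ?C)" using fin hd_S by (intro card_mono) auto
  also have "\<dots> \<le> card ?C" by (rule card_image_le) (use fin in auto)
  also have "\<dots> = m - \<nu> ! 0"
    using card_cells_off_first_row[OF fin assms(3)] bij_betw_same_card[OF assms(2)] by simp
  finally show ?thesis .
qed

lemma card_not_first_row_le:
  assumes "OP \<in> Omega n m" and "bij_betw T (cells \<nu>) {1..m}" and "\<nu> \<noteq> []"
  shows "card {A \<in> OP. sub_word \<nu> T A \<noteq> [1]}
    \<le> card {A \<in> OP. 2 \<le> length A} + (m - \<nu> ! 0)"
proof -
  from assms(1) have fin: "finite OP" and nonempty: "\<And>A. A \<in> OP \<Longrightarrow> A \<noteq> []"
    unfolding Omega_def by auto
  have "{A \<in> OP. sub_word \<nu> T A \<noteq> [1]}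
      \<subseteq> {A \<in> OP. 2 \<le> length A} \<union> {A \<in> OP. length A = 1 \<and> sub_word \<nu> T A \<noteq> [1]}"
  proof
    fix A assume "A \<in> {A \<in> OP. sub_word \<nu> T A \<noteq> [1]}"
    moreover have "length A = 1 \<or> 2 \<le> length A" if "A \<noteq> []"
      using that by (cases A) (auto simp: Suc_le_eq)
    ultimately show "A \<in> {A \<in> OP. 2 \<le> length A}
        \<union> {A \<in> OP. length A = 1 \<and> sub_word \<nu> T A \<noteq> [1]}"
      using nonempty by blast
  qed
  then have "card {A \<in> OP. sub_word \<nu> T A \<noteq> [1]}
      \<le> card ({A \<in> OP. 2 \<le> length A} \<union> {A \<in> OP. length A = 1 \<and> sub_word \<nu> T A \<noteq> [1]})"
    using fin by (intro card_mono) auto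
  also have "\<dots> \<le> card {A \<in> OP. 2 \<le> length A}
      + card {A \<in> OP. length A = 1 \<and> sub_word \<nu> T A \<noteq> [1]}"
    by (rule card_Un_le)
  finally show ?thesis using card_singletons_off_first_row[OF assms] by linarith
qed

lemma shift_part_nonempty: "shift_part \<mu> s \<noteq> []"
  by (cases \<mu>) auto

lemma shift_part_first_ge: "s \<le> shift_part \<mu> s ! 0"
  by (cases \<mu>) auto

theorem proposition4p28:
  fixes K n :: nat and OP :: "nat list set"
  assumes "OP \<in> Omega n (n + K)"
  shows "(\<forall>A\<in>OP. length A \<le> K + 1)
    \<and> card {A \<in> OP. 2 \<le> length A} \<le> K
    \<and> (\<forall>\<mu> T. is_partition \<mu> (4 * K) \<longrightarrow> 3 * K \<le> n \<longrightarrow>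
          standard_tableau (shift_part \<mu> (n - 3 * K)) (n + K) T \<longrightarrow>
            (\<forall>A\<in>OP. length (sub_word (shift_part \<mu> (n - 3 * K)) T A) \<le> K + 1)
          \<and> card {A \<in> OP. 2 \<le> length (sub_word (shift_part \<mu> (n - 3 * K)) T A)} \<le> K
          \<and> card {A \<in> OP. sub_word (shift_part \<mu> (n - 3 * K)) T A \<noteq> [1]} \<le> 16 * K ^ 2)"
proof -
  have "card {A \<in> OP. sub_word (shift_part \<mu> (n - 3 * K)) T A \<noteq> [1]} \<le> 16 * K ^ 2"
    if "standard_tableau (shift_part \<mu> (n - 3 * K)) (n + K) T" for \<mu> T
  proof -
    let ?\<nu> = "shift_part \<mu> (n - 3 * K)"
    have "bij_betw T (cells ?\<nu>) {1..n + K}"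
      using that by (simp add: standard_tableau_def)
    then have "card {A \<in> OP. sub_word ?\<nu> T A \<noteq> [1]}
        \<le> card {A \<in> OP. 2 \<le> length A} + (n + K - ?\<nu> ! 0)"
      by (rule card_not_first_row_le[OF assms _ shift_part_nonempty])
    also have "\<dots> \<le> K + (n + K - ?\<nu> ! 0)"
      using card_long_Omega[OF assms] by (rule add_right_mono)
    also have "\<dots> \<le> 5 * K" using shift_part_first_ge[of "n - 3 * K" \<mu>] by linarith
    also have "\<dots> \<le> 16 * K ^ 2" by (cases K) (auto simp: power2_eq_square)
    finally show ?thesis .
  qed
  with length_le_Omega[OF assms] card_long_Omega[OF assms] show ?thesis
    by simp
qed

end
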